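(* Let $\delta > 0$. There is a function $\epsilon \colon B_{\delta}(\vec 0) \to \mathbb R$ such that for all $\vec \theta \in B_{\delta}(\vec 0)$, \[ \operatorname{Re}(\Phi(\vec \theta)) = e^{-\frac{1}{2} \vec \theta^T M \vec \theta} (1 + \epsilon(\vec \theta)) \] and $|\epsilon(\vec \theta)| \leq \frac{1}{6} (d \delta)^4 e^{\frac{1}{2} d^2 \delta^2}$. Moreover, for all $\vec\theta\in B_\delta(\vec 0)$, \[ |\operatorname{Im}(\Phi(\vec \theta))| \leq \frac{(d \delta)^3}{6}. \] Further, if $d \delta < 1$, then $\operatorname{Re}(\Phi(\vec \theta)) > 1/3$ for all $\vec\theta\in B_\delta(\vec 0)$.
   Context: Let $g\ge 2$, $k\ge 2$ be integers, $\mathbb Z_g$ the integers mod $g$, and $d=\binom{k}{2}(g-1)$. Index the coordinates of $\mathbb R^d$ by pairs $(\{i,j\},a)$ with $1\le i<j\le k$ and $a\in\mathbb Z_g\setminus\{0\}$. Define $Z:(\mathbb Z_g)^k\to\mathbb R^d$ by $[Z(\vec x)]_{\{i,j\},a}=1-1/g$ if $x_i-x_j=a$ and $-1/g$ otherwise, and $\Phi(\vec\theta)=\sum_{\vec x\in(\mathbb Z_g)^k} g^{-k}e^{i\vec\theta\cdot Z(\vec x)}$. Let $B_\delta(\vec 0)=\{\vec\mu\in[-\pi,\pi)^d: \vec\mu\equiv\vec\zeta \pmod{2\pi}$ componentwise, for some $\vec\zeta$ with $|\zeta_{\{i,j\},a}|<\delta$ for all coordinates$\}$. Let $M$ be the $d\times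 d$ matrix indexed like $\mathbb R^d$ with $M_{(\{i,j\},a),(\{m,n\},b)}=\frac{g-1}{g^2}$ if $\{i,j\}=\{m,n\}$ and $a=b$; $-\frac{1}{g^2}$ if $\{i,j\}=\{m,n\}$ and $a\ne b$; and $0$ if $\{i,j\}\ne\{m,n\}$. *)

theory Defs
  imports Complex_Main "HOL-Library.FuncSet"
begin

text \<open>Coordinates of R^d: pairs ((i,j),a) with 1 <= i < j <= k and a in Z_g \ {0},
  where Z_g is represented by {0..<g}.  Vectors are functions on this index set
  (extensional: zero outside).\<close>

definition coords :: "nat \<Rightarrow> nat \<Rightarrow> ((nat \<times> nat) \<times> nat) set" where
  "coords g k = {((i,j),a). 1 \<le> i \<and> i < j \<and> j \<le> k \<and> 1 \<le> a \<and> a < g}"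

definition dimd :: "nat \<Rightarrow> nat \<Rightarrow> nat" where
  "dimd g k = (k choose 2) * (g - 1)"

definition Zgk :: "nat \<Rightarrow> nat \<Rightarrow> (nat \<Rightarrow> nat) set" where
  "Zgk g k = PiE {1..k} (\<lambda>_. {0..<g})"

definition Zvec :: "nat \<Rightarrow> nat \<Rightarrow> (nat \<Rightarrow> nat) \<Rightarrow> ((nat \<times> nat) \<times> nat) \<Rightarrow> real" where
  "Zvec g k x c = (if c \<in> coords g k then
      (case c of ((i,j),a) \<Rightarrow>
        if (int (x i) - int (x j)) mod int g = int a then 1 - 1 / real g else - 1 / real g)
     else 0)"

definition Phi :: "nat \<Rightarrow> nat \<Rightarrow> (((nat \<times> nat) \<times> nat) \<Rightarrow> real) \<Rightarrow> complex" where
  "Phi g k \<theta> = (\<Sum>x\<in>Zgk g k. complex_of_real (1 / real g ^ k) *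
      exp (\<i> * complex_of_real (\<Sum>c\<in>coords g k. \<theta> c * Zvec g k x c)))"

definition Bdelta :: "nat \<Rightarrow> nat \<Rightarrow> real \<Rightarrow> (((nat \<times> nat) \<times> nat) \<Rightarrow> real) set" where
  "Bdelta g k \<delta> = {\<theta>. (\<forall>c\<in>coords g k. - pi \<le> \<theta> c \<and> \<theta> c < pi \<and>
        (\<exists>\<zeta> (m::int). \<bar>\<zeta>\<bar> < \<delta> \<and> \<theta> c = \<zeta> + 2 * pi * of_int m)) \<and>
      (\<forall>c. c \<notin> coords g k \<longrightarrow> \<theta> c = 0)}"

definition Mmat :: "nat \<Rightarrow> ((nat \<times> nat) \<times> nat) \<Rightarrow> ((nat \<times> nat) \<times> nat) \<Rightarrow> real" where
  "Mmat g c c' = (if fst c = fst c' then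
       (if snd c = snd c' then (real g - 1) / real g ^ 2 else - 1 / real g ^ 2)
     else 0)"

definition quadM :: "nat \<Rightarrow> nat \<Rightarrow> (((nat \<times> nat) \<times> nat) \<Rightarrow> real) \<Rightarrow> real" where
  "quadM g k \<theta> = (\<Sum>c\<in>coords g k. \<Sum>c'\<in>coords g k. \<theta> c * Mmat g c c' * \<theta> c')"

end

theory Submission
  imports Defs
begin

text \<open>
  \<open>\<Phi>(\<theta>)\<close> is the average of \<open>exp (i s(x))\<close> over \<open>x\<close>, with phase \<open>s(x) = \<theta> \<cdot> Z(x)\<close>.
  Counting solutions of \<open>x\<^sub>i - x\<^sub>j = a\<close> modulo \<open>g\<close> shows that the vectors \<open>Z(x)\<close> have
  mean zero and second moment matrix \<open>M\<close>; hence the phases have mean zero and mean square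
  \<open>\<theta>\<^sup>T M \<theta>\<close>, and \<open>|s(x)| \<le> d \<delta>\<close> on \<open>B\<^sub>\<delta>(0)\<close>. Averaging the Taylor bounds
  \<open>|cos s - (1 - s\<^sup>2/2)| \<le> s\<^sup>4/24\<close> and \<open>|sin s - s| \<le> |s|\<^sup>3/6\<close> over \<open>x\<close> gives
  \<open>|Re \<Phi> - (1 - \<theta>\<^sup>T M \<theta>/2)| \<le> (d \<delta>)\<^sup>4/24\<close> and the bound on \<open>Im \<Phi>\<close>;
  comparing \<open>1 - q/2\<close> with \<open>exp (-q/2)\<close> turns the former into the multiplicative form.
\<close>

lemma cos_Maclaurin_bound: "\<bar>cos x - (1 - x^2/2)\<bar> \<le> x^4/24" for x :: real
proof -
  obtain t where "cos x = (\<Sum>m<4. cos_coeff m * x ^ m) + cos (t + 1/2 * real 4 * pi) / fact 4 * x ^ 4"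
    using Maclaurin_cos_expansion by blast
  moreover have "(\<Sum>m<4. cos_coeff m * x ^ m) = 1 - x^2/2"
  proof -
    have "cos_coeff 0 = 1" "cos_coeff 1 = 0" "cos_coeff 2 = -1/2" "cos_coeff 3 = 0"
      by (simp_all add: cos_coeff_def fact_numeral)
    then show ?thesis by (simp add: eval_nat_numeral)
  qed
  moreover have "\<bar>cos (t + 1/2 * real 4 * pi)\<bar> * x^4 \<le> x^4"
    using abs_cos_le_one by (intro mult_left_le_one_le) auto
  ultimately show ?thesis by (simp add: abs_mult fact_numeral)
qed

lemma sin_Maclaurin_bound: "\<bar>sin x - x\<bar> \<le> \<bar>x\<bar>^3/6" for x :: real
proof -
  have "\<bar>sin x - (\<Sum>m<3. sin_coeff m * x ^ m)\<bar> \<le> inverse (fact 3) * \<bar>x\<bar> ^ 3"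
    by (rule Maclaurin_sin_bound)
  moreover have "(\<Sum>m<3. sin_coeff m * x ^ m) = x"
    by (simp add: eval_nat_numeral sin_coeff_def)
  ultimately show ?thesis by (simp add: fact_numeral divide_simps)
qed

lemma exp_minus_le_Maclaurin:
  fixes u :: real
  assumes "0 \<le> u"
  shows "exp (-u) \<le> 1 - u + u^2/2"
proof -
  obtain t where "exp (-u) = (\<Sum>m<3. (-u) ^ m / fact m) + exp t / fact 3 * (-u) ^ 3"
    using Maclaurin_exp_le[of "-u" 3] by blast
  moreover have "exp t / fact 3 * (-u) ^ 3 \<le> 0"
    using assms by (simp add: mult_nonneg_nonpos)
  ultimately show ?thesis by (simp add: eval_nat_numeral)
qed

lemma one_minus_mult_exp_bounds:
  fixes u :: real
  assumes "0 \<le> u"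
  shows "(1 - u) * exp u \<le> 1" and "1 - (1 - u) * exp u \<le> u^2/2 * exp u"
proof -
  have "(1 - u) * exp u \<le> exp (-u) * exp u"
    using exp_ge_add_one_self[of "-u"] by (intro mult_right_mono) auto
  then show "(1 - u) * exp u \<le> 1" by (simp add: exp_minus)
  have "exp (-u) * exp u \<le> (1 - u + u^2/2) * exp u"
    using exp_minus_le_Maclaurin[OF assms] by (intro mult_right_mono) auto
  then show "1 - (1 - u) * exp u \<le> u^2/2 * exp u" by (simp add: exp_minus algebra_simps)
qed

lemma abs_mult_exp_half_minus_one_le:
  fixes q t C :: real
  assumes "0 \<le> q" "q \<le> t^2" and approx: "\<bar>C - (1 - q/2)\<bar> \<le> t^4/24"
  shows "\<bar>C * exp (q/2) - 1\<bar> \<le> 1/6 * t^4 * exp (t^2/2)"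
proof -
  define u where "u = q/2"
  have u: "0 \<le> u" "u \<le> t^2/2" using assms unfolding u_def by auto
  have u2: "u^2 \<le> t^4/4"
    using power_mono[OF u(2), of 2] u(1) by (simp add: power2_eq_square eval_nat_numeral)
  have "C * exp u - 1 = (C - (1 - u)) * exp u + ((1 - u) * exp u - 1)"
    by (simp add: algebra_simps)
  then have "\<bar>C * exp u - 1\<bar> \<le> \<bar>C - (1 - u)\<bar> * exp u + \<bar>(1 - u) * exp u - 1\<bar>"
    by (metis abs_mult abs_triangle_ineq abs_exp_cancel)
  also have "\<dots> \<le> t^4/24 * exp u + u^2/2 * exp u"
    using approx one_minus_mult_exp_bounds[OF u(1)] unfolding u_def
    by (intro add_mono mult_right_mono) auto
  also have "\<dots> \<le> t^4/24 * exp u + t^4/8 * exp u"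
    using u2 by (intro add_mono mult_right_mono) auto
  also have "\<dots> \<le> 1/6 * t^4 * exp (t^2/2)"
    using u(2) by (simp add: mult.commute[of _ "exp _"] mult_right_mono)
  finally show ?thesis unfolding u_def .
qed

lemma sum_cos_Maclaurin_bound:
  fixes s :: "'a \<Rightarrow> real" and t :: real
  assumes "finite X" "\<And>x. x \<in> X \<Longrightarrow> \<bar>s x\<bar> \<le> t"
  shows "\<bar>(\<Sum>x\<in>X. cos (s x)) - (card X - (\<Sum>x\<in>X. (s x)^2) / 2)\<bar> \<le> card X * t^4/24"
proof -
  have "\<bar>cos (s x) - (1 - (s x)^2/2)\<bar> \<le> t^4/24" if "x \<in> X" for x
  proof -
    have "\<bar>s x\<bar>^4 \<le> t^4" using assms(2)[OF that] by (intro power_mono) auto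
    then show ?thesis using cos_Maclaurin_bound[of "s x"] by (simp add: power_even_abs)
  qed
  then have "(\<Sum>x\<in>X. \<bar>cos (s x) - (1 - (s x)^2/2)\<bar>) \<le> card X * (t^4/24)"
    by (rule sum_bounded_above)
  moreover have "(\<Sum>x\<in>X. cos (s x) - (1 - (s x)^2/2)) = (\<Sum>x\<in>X. cos (s x)) - (card X - (\<Sum>x\<in>X. (s x)^2) / 2)"
    by (simp add: sum_subtractf sum_divide_distrib)
  ultimately show ?thesis
    using sum_abs[of "\<lambda>x. cos (s x) - (1 - (s x)^2/2)" X] by simp
qed

lemma abs_sum_sin_le:
  fixes s :: "'a \<Rightarrow> real" and t :: real
  assumes "finite X" "(\<Sum>x\<in>X. s x) = 0" "\<And>x. x \<in> X \<Longrightarrow> \<bar>s x\<bar> \<le> t"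
  shows "\<bar>\<Sum>x\<in>X. sin (s x)\<bar> \<le> card X * t^3/6"
proof -
  have "\<bar>sin (s x) - s x\<bar> \<le> t^3/6" if "x \<in> X" for x
    using sin_Maclaurin_bound[of "s x"] power_mono[OF assms(3)[OF that], of 3] by simp
  then have "(\<Sum>x\<in>X. \<bar>sin (s x) - s x\<bar>) \<le> card X * (t^3/6)"
    by (rule sum_bounded_above)
  moreover have "(\<Sum>x\<in>X. sin (s x) - s x) = (\<Sum>x\<in>X. sin (s x))"
    using assms(2) by (simp add: sum_subtractf)
  ultimately show ?thesis
    using sum_abs[of "\<lambda>x. sin (s x) - s x" X] by simp
qed

lemma sum_PiE_split:
  fixes f :: "('a \<Rightarrow> 'b) \<Rightarrow> 'c::comm_monoid_add"
  assumes "finite I" "i \<in> I"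
  shows "(\<Sum>x\<in>PiE I B. f x) = (\<Sum>y\<in>PiE (I - {i}) B. \<Sum>v\<in>B i. f (y(i := v)))"
proof -
  have "(\<Sum>x\<in>PiE I B. f x) = (\<Sum>(v,y)\<in>B i \<times> PiE (I - {i}) B. f (y(i := v)))"
    using assms
    by (intro sum.reindex_bij_witness[of _ "\<lambda>(v,y). y(i := v)" "\<lambda>x. (x i, x(i := undefined))"])
       (auto simp: PiE_def extensional_def)
  also have "\<dots> = (\<Sum>y\<in>PiE (I - {i}) B. \<Sum>v\<in>B i. f (y(i := v)))"
    by (simp add: sum.cartesian_product[symmetric] sum.swap[of _ "B i"])
  finally show ?thesis .
qed

lemma card_PiE_filter_fibres:
  assumes "finite I" "i \<in> I" "\<And>j. j \<in> I \<Longrightarrow> finite (B j)"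
  shows "card {x \<in> PiE I B. Q x} = (\<Sum>y\<in>PiE (I - {i}) B. card {v \<in> B i. Q (y(i := v))})"
proof -
  have "card {x \<in> PiE I B. Q x} = (\<Sum>x\<in>PiE I B. of_bool (Q x))"
    using assms by (simp add: finite_PiE Int_def)
  also have "\<dots> = (\<Sum>y\<in>PiE (I - {i}) B. \<Sum>v\<in>B i. of_bool (Q (y(i := v))))"
    by (rule sum_PiE_split[OF assms(1,2)])
  also have "\<dots> = (\<Sum>y\<in>PiE (I - {i}) B. card {v \<in> B i. Q (y(i := v))})"
    using assms by (simp add: Int_def)
  finally show ?thesis .
qed

lemma card_residue_class:
  assumes "0 < g"
  shows "card {v \<in> {0..<g}. int v mod int g = r mod int g} = 1"
proof -
  have "{v \<in> {0..<g}. int v mod int g = r mod int g} = {nat (r mod int g)}"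
    using assms by (auto simp: nat_less_iff)
  then show ?thesis by simp
qed

definition diff_mod :: "nat \<Rightarrow> (nat \<Rightarrow> nat) \<Rightarrow> nat \<Rightarrow> nat \<Rightarrow> int" where
  "diff_mod g x i j = (int (x i) - int (x j)) mod int g"

lemma card_diff_mod_update_eq:
  assumes "m \<noteq> n" "p \<in> {m, n}" "b < g"
  shows "card {v \<in> {0..<g}. diff_mod g (y(p := v)) m n = int b} = 1"
proof -
  have b: "int b = int b mod int g" using assms(3) by simp
  consider "p = m" | "p = n" using assms(2) by blast
  then show ?thesis
  proof cases
    case 1
    have "diff_mod g (y(p := v)) m n = int b \<longleftrightarrow> int v mod int g = (int (y n) + int b) mod int g" for v
      using 1 assms(1) by (subst b) (simp add: diff_mod_def mod_eq_dvd_iff algebra_simps)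
    then show ?thesis using assms(3) card_residue_class[of g] by simp
  next
    case 2
    have "diff_mod g (y(p := v)) m n = int b \<longleftrightarrow> int v mod int g = (int (y m) - int b) mod int g" for v
      using 2 assms(1) by (subst b) (simp add: diff_mod_def mod_eq_dvd_iff dvd_diff_commute algebra_simps)
    then show ?thesis using assms(3) card_residue_class[of g] by simp
  qed
qed

lemma card_PiE_diff_mod_eq:
  assumes "finite I" "i \<in> I" "j \<in> I" "i \<noteq> j" "a < g"
  shows "card {x \<in> PiE I (\<lambda>_. {0..<g}). diff_mod g x i j = int a} = g ^ (card I - 1)"
proof -
  have "card {x \<in> PiE I (\<lambda>_. {0..<g}). diff_mod g x i j = int a}
      = (\<Sum>y\<in>PiE (I - {i}) (\<lambda>_. {0..<g}). card {v \<in> {0..<g}. diff_mod g (y(i := v)) i j = int a})"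
    using assms by (intro card_PiE_filter_fibres) auto
  also have "\<dots> = (\<Sum>y\<in>PiE (I - {i}) (\<lambda>_. {0..<g}). 1)"
    using assms by (intro sum.cong refl card_diff_mod_update_eq) auto
  also have "\<dots> = g ^ (card I - 1)"
    using assms by (simp add: card_PiE)
  finally show ?thesis .
qed

lemma card_PiE_two_diff_mod_eq:
  assumes "finite I" "i \<in> I" "j \<in> I" "i \<noteq> j" "m \<in> I" "n \<in> I" "m \<noteq> n"
    "{i, j} \<noteq> {m, n}" "a < g" "b < g"
  shows "card {x \<in> PiE I (\<lambda>_. {0..<g}). diff_mod g x i j = int a \<and> diff_mod g x m n = int b}
          = g ^ (card I - 2)"
proof -
  obtain p where p: "p \<in> {m, n}" "p \<notin> {i, j}"
  proof -
    have "\<not> {m, n} \<subseteq> {i, j}" using assms(4,7,8) by (auto simp: doubleton_eq_iff)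
    then show ?thesis using that by blast
  qed
  have unchanged: "diff_mod g (y(p := v)) i j = diff_mod g y i j" for y v
    using p by (simp add: diff_mod_def)
  have "card {x \<in> PiE I (\<lambda>_. {0..<g}). diff_mod g x i j = int a \<and> diff_mod g x m n = int b}
      = (\<Sum>y\<in>PiE (I - {p}) (\<lambda>_. {0..<g}).
           card {v \<in> {0..<g}. diff_mod g y i j = int a \<and> diff_mod g (y(p := v)) m n = int b})"
    using assms p by (subst card_PiE_filter_fibres[where i = p]) (auto simp: unchanged)
  also have "\<dots> = (\<Sum>y\<in>PiE (I - {p}) (\<lambda>_. {0..<g}). of_bool (diff_mod g y i j = int a))"
  proof (intro sum.cong refl)
    fix y
    show "card {v \<in> {0..<g}. diff_mod g y i j = int a \<and> diff_mod g (y(p := v)) m n = int b}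
        = of_bool (diff_mod g y i j = int a)"
      using card_diff_mod_update_eq[OF assms(7) p(1) assms(10), of y] by (cases "diff_mod g y i j = int a") auto
  qed
  also have "\<dots> = card {y \<in> PiE (I - {p}) (\<lambda>_. {0..<g}). diff_mod g y i j = int a}"
    using assms by (simp add: finite_PiE Int_def)
  also have "\<dots> = g ^ (card (I - {p}) - 1)"
    using assms p by (intro card_PiE_diff_mod_eq) auto
  also have "card (I - {p}) - 1 = card I - 2"
    using assms p by auto
  finally show ?thesis .
qed

lemma card_ordered_pairs: "card {(i, j). 1 \<le> i \<and> i < j \<and> j \<le> k} = k choose 2"
proof (induction k)
  case 0
  have "{(i, j). 1 \<le> i \<and> i < j \<and> j \<le> (0::nat)} = {}" by auto
  then show ?case by (simp only:) simp
next
  case (Suc k)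
  have split: "{(i, j). 1 \<le> i \<and> i < j \<and> j \<le> Suc k} =
      {(i, j). 1 \<le> i \<and> i < j \<and> j \<le> k} \<union> (\<lambda>i. (i, Suc k)) ` {1..k}" by auto
  have "finite {(i, j). 1 \<le> i \<and> i < j \<and> j \<le> k}"
    by (rule finite_subset[of _ "{..k} \<times> {..k}"]) auto
  then have "card {(i, j). 1 \<le> i \<and> i < j \<and> j \<le> Suc k} = (k choose 2) + k"
    unfolding split using Suc by (subst card_Un_disjoint) (auto simp: card_image inj_on_def)
  then show ?case by (simp add: numeral_2_eq_2)
qed

lemma card_coords: "card (coords g k) = dimd g k"
proof -
  have "coords g k = {(i, j). 1 \<le> i \<and> i < j \<and> j \<le> k} \<times> {1..<g}"
    unfolding coords_def by auto
  then show ?thesis by (simp only: card_cartesian_product card_ordered_pairs) (simp add: dimd_def)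
qed

lemma finite_Zgk: "finite (Zgk g k)"
  unfolding Zgk_def by (intro finite_PiE) auto

lemma card_Zgk: "card (Zgk g k) = g ^ k"
  unfolding Zgk_def by (simp add: card_PiE)

lemma coordsD:
  assumes "((i, j), a) \<in> coords g k"
  shows "i \<in> {1..k}" "j \<in> {1..k}" "i < j" "a < g" "2 \<le> k"
  using assms by (auto simp: coords_def)

lemma Zvec_eq:
  assumes "((i, j), a) \<in> coords g k"
  shows "Zvec g k x ((i, j), a) = of_bool (diff_mod g x i j = int a) - 1 / real g"
  using assms by (simp add: Zvec_def diff_mod_def)

lemma card_Zgk_diff_mod_eq:
  assumes "((i, j), a) \<in> coords g k"
  shows "card {x \<in> Zgk g k. diff_mod g x i j = int a} = g ^ (k - 1)"
  unfolding Zgk_def using coordsD[OF assms] by (subst card_PiE_diff_mod_eq) auto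

lemma card_Zgk_two_diff_mod_eq:
  assumes "((i, j), a) \<in> coords g k" "((m, n), b) \<in> coords g k"
  shows "card {x \<in> Zgk g k. diff_mod g x i j = int a \<and> diff_mod g x m n = int b}
       = (if (i, j) = (m, n) then if a = b then g ^ (k - 1) else 0 else g ^ (k - 2))"
proof (cases "(i, j) = (m, n)")
  case True
  then have "{x \<in> Zgk g k. diff_mod g x i j = int a \<and> diff_mod g x m n = int b}
      = (if a = b then {x \<in> Zgk g k. diff_mod g x i j = int a} else {})"
    by auto
  with True show ?thesis using card_Zgk_diff_mod_eq[OF assms(1)] by auto
next
  case False
  note ija = coordsD[OF assms(1)] and mnb = coordsD[OF assms(2)]
  with False have "{i, j} \<noteq> {m, n}" by (auto simp: doubleton_eq_iff)
  then show ?thesis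
    unfolding Zgk_def using False ija mnb by (subst card_PiE_two_diff_mod_eq) auto
qed

lemma abs_Zvec_le_one: "g \<ge> 2 \<Longrightarrow> \<bar>Zvec g k x c\<bar> \<le> 1"
  by (auto simp: Zvec_def split: prod.splits)

lemma sum_Zvec_eq_0:
  assumes "g \<ge> 2" "c \<in> coords g k"
  shows "(\<Sum>x\<in>Zgk g k. Zvec g k x c) = 0"
proof -
  obtain i j a where c: "c = ((i, j), a)" by (metis prod.collapse)
  have k: "real g ^ k = real g ^ (k - 1) * real g"
    using coordsD(5)[OF assms(2)[unfolded c]] by (cases k) (auto simp: mult.commute)
  have "(\<Sum>x\<in>Zgk g k. Zvec g k x c)
      = real (card {x \<in> Zgk g k. diff_mod g x i j = int a}) - real g ^ k / real g"
    using assms c by (simp add: Zvec_eq sum_subtractf finite_Zgk card_Zgk Int_def)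
  also have "\<dots> = 0"
    using assms c by (simp add: card_Zgk_diff_mod_eq k)
  finally show ?thesis .
qed

lemma sum_Zvec_mult_Zvec:
  assumes "g \<ge> 2" "c \<in> coords g k" "c' \<in> coords g k"
  shows "(\<Sum>x\<in>Zgk g k. Zvec g k x c * Zvec g k x c') = real g ^ k * Mmat g c c'"
proof -
  obtain i j a where c: "c = ((i, j), a)" by (metis prod.collapse)
  obtain m n b where c': "c' = ((m, n), b)" by (metis prod.collapse)
  have k: "2 \<le> k" using coordsD(5)[OF assms(2)[unfolded c]] .
  define P where "P x \<longleftrightarrow> diff_mod g x i j = int a" for x
  define Q where "Q x \<longleftrightarrow> diff_mod g x m n = int b" for x
  define N where "N R = real (card {x \<in> Zgk g k. R x})" for R
  define G where "G = real g ^ k"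
  have g: "real g > 0" using assms(1) by simp
  have G1: "real g ^ (k - 1) = G / real g"
    using power_diff[of "real g" 1 k] k g by (simp add: G_def)
  have G2: "real g ^ (k - 2) = G / real g ^ 2"
    using power_diff[of "real g" 2 k] k g by (simp add: G_def)
  have NP: "N P = G / real g" and NQ: "N Q = G / real g"
    unfolding N_def P_def Q_def
    using card_Zgk_diff_mod_eq[OF assms(2)[unfolded c]] card_Zgk_diff_mod_eq[OF assms(3)[unfolded c']] G1
    by simp_all
  have NPQ: "N (\<lambda>x. P x \<and> Q x) = G * (if (i, j) = (m, n) then if a = b then 1 / real g else 0 else 1 / real g ^ 2)"
    unfolding N_def P_def Q_def card_Zgk_two_diff_mod_eq[OF assms(2,3)[unfolded c c']]
    by (simp add: G1 G2 del: One_nat_def)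
  have "(\<Sum>x\<in>Zgk g k. Zvec g k x c * Zvec g k x c')
      = (\<Sum>x\<in>Zgk g k. of_bool (P x \<and> Q x) - of_bool (P x) / real g - of_bool (Q x) / real g + 1 / real g ^ 2)"
    using assms c c' by (intro sum.cong refl) (simp add: Zvec_eq P_def Q_def power2_eq_square field_simps)
  also have "\<dots> = N (\<lambda>x. P x \<and> Q x) - N P / real g - N Q / real g + G / real g ^ 2"
    by (simp add: N_def G_def sum.distrib sum_subtractf sum_divide_distrib[symmetric] finite_Zgk card_Zgk Int_def)
  also have "\<dots> = G * Mmat g c c'"
    using c c' g unfolding NP NQ NPQ by (auto simp: Mmat_def field_simps power2_eq_square)
  finally show ?thesis unfolding G_def .
qed

definition phase :: "nat \<Rightarrow> nat \<Rightarrow> (((nat \<times> nat) \<times> nat) \<Rightarrow> real) \<Rightarrow> (nat \<Rightarrow> nat) \<Rightarrow> real" where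
  "phase g k \<theta> x = (\<Sum>c\<in>coords g k. \<theta> c * Zvec g k x c)"

lemma Re_Phi: "Re (Phi g k \<theta>) = (\<Sum>x\<in>Zgk g k. cos (phase g k \<theta> x)) / real g ^ k"
proof -
  have summand: "Re (complex_of_real r * exp (\<i> * complex_of_real y)) = r * cos y" for r y
    by (simp flip: cis_conv_exp)
  show ?thesis unfolding Phi_def Re_sum summand phase_def by (simp add: sum_divide_distrib)
qed

lemma Im_Phi: "Im (Phi g k \<theta>) = (\<Sum>x\<in>Zgk g k. sin (phase g k \<theta> x)) / real g ^ k"
proof -
  have summand: "Im (complex_of_real r * exp (\<i> * complex_of_real y)) = r * sin y" for r y
    by (simp flip: cis_conv_exp)
  show ?thesis unfolding Phi_def Im_sum summand phase_def by (simp add: sum_divide_distrib)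
qed

lemma sum_phase_eq_0:
  assumes "g \<ge> 2"
  shows "(\<Sum>x\<in>Zgk g k. phase g k \<theta> x) = 0"
  unfolding phase_def
  by (subst sum.swap) (simp add: sum_distrib_left[symmetric] sum_Zvec_eq_0[OF assms])

lemma sum_phase_squared:
  assumes "g \<ge> 2"
  shows "(\<Sum>x\<in>Zgk g k. (phase g k \<theta> x)^2) = real g ^ k * quadM g k \<theta>"
proof -
  have "(phase g k \<theta> x)^2
      = (\<Sum>c\<in>coords g k. \<Sum>c'\<in>coords g k. \<theta> c * \<theta> c' * (Zvec g k x c * Zvec g k x c'))" for x
    unfolding phase_def power2_eq_square sum_product by (simp add: mult_ac)
  then have "(\<Sum>x\<in>Zgk g k. (phase g k \<theta> x)^2)
      = (\<Sum>c\<in>coords g k. \<Sum>c'\<in>coords g k. \<theta> c * \<theta> c' * (\<Sum>x\<in>Zgk g k. Zvec g k x c * Zvec g k x c'))"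
    by (simp add: sum_distrib_left) (subst sum.swap, simp add: sum.swap[of _ "Zgk g k"])
  also have "\<dots> = real g ^ k * quadM g k \<theta>"
    by (simp add: sum_Zvec_mult_Zvec[OF assms] quadM_def sum_distrib_left mult_ac)
  finally show ?thesis .
qed

lemma abs_less_if_shift_2pi:
  fixes \<theta> \<zeta> \<delta> :: real and m :: int
  assumes "- pi \<le> \<theta>" "\<theta> < pi" "\<bar>\<zeta>\<bar> < \<delta>" "\<theta> = \<zeta> + 2 * pi * m"
  shows "\<bar>\<theta>\<bar> < \<delta>"
proof (cases "m = 0")
  case False
  then have "2 * pi \<le> \<bar>2 * pi * m\<bar>"
    using pi_gt_zero by (simp add: abs_mult)
  then show ?thesis using assms by linarith
qed (use assms in simp)

lemma abs_less_if_in_Bdelta: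
  assumes "\<theta> \<in> Bdelta g k \<delta>" "c \<in> coords g k"
  shows "\<bar>\<theta> c\<bar> < \<delta>"
  using assms abs_less_if_shift_2pi unfolding Bdelta_def by blast

lemma abs_phase_le:
  assumes "g \<ge> 2" "\<theta> \<in> Bdelta g k \<delta>"
  shows "\<bar>phase g k \<theta> x\<bar> \<le> real (dimd g k) * \<delta>"
proof -
  have "\<bar>phase g k \<theta> x\<bar> \<le> (\<Sum>c\<in>coords g k. \<bar>\<theta> c\<bar> * \<bar>Zvec g k x c\<bar>)"
    unfolding phase_def abs_mult[symmetric] by (rule sum_abs)
  also have "\<dots> \<le> (\<Sum>c\<in>coords g k. \<delta>)"
  proof (intro sum_mono)
    fix c assume "c \<in> coords g k"
    then have "\<bar>\<theta> c\<bar> < \<delta>" by (rule abs_less_if_in_Bdelta[OF assms(2)])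
    then have "\<bar>\<theta> c\<bar> * \<bar>Zvec g k x c\<bar> \<le> \<delta> * 1"
      using abs_Zvec_le_one[OF assms(1)] by (intro mult_mono) auto
    then show "\<bar>\<theta> c\<bar> * \<bar>Zvec g k x c\<bar> \<le> \<delta>" by simp
  qed
  finally show ?thesis by (simp add: card_coords)
qed

lemma quadM_eq_mean_phase_squared:
  assumes "g \<ge> 2"
  shows "quadM g k \<theta> = (\<Sum>x\<in>Zgk g k. (phase g k \<theta> x)^2) / card (Zgk g k)"
  using assms by (simp add: sum_phase_squared card_Zgk)

lemma quadM_bounds:
  assumes "g \<ge> 2" "\<theta> \<in> Bdelta g k \<delta>"
  shows "0 \<le> quadM g k \<theta>" "quadM g k \<theta> \<le> (real (dimd g k) * \<delta>)^2"
proof -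
  show "0 \<le> quadM g k \<theta>"
    unfolding quadM_eq_mean_phase_squared[OF assms(1)] by (simp add: sum_nonneg)
  have "(phase g k \<theta> x)^2 \<le> (real (dimd g k) * \<delta>)^2" for x
    using power_mono[OF abs_phase_le[OF assms], where n = 2] by simp
  then have "(\<Sum>x\<in>Zgk g k. (phase g k \<theta> x)^2) \<le> card (Zgk g k) * (real (dimd g k) * \<delta>)^2"
    by (intro sum_bounded_above)
  then show "quadM g k \<theta> \<le> (real (dimd g k) * \<delta>)^2"
    unfolding quadM_eq_mean_phase_squared[OF assms(1)] using assms(1)
    by (simp add: card_Zgk field_simps)
qed

lemma Re_Phi_approx:
  assumes "g \<ge> 2" "\<theta> \<in> Bdelta g k \<delta>"
  shows "\<bar>Re (Phi g k \<theta>) - (1 - quadM g k \<theta> / 2)\<bar> \<le> (real (dimd g k) * \<delta>)^4 / 24"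
proof -
  define N where "N = real (card (Zgk g k))"
  have N: "N > 0" using assms(1) by (simp add: N_def card_Zgk)
  have "Re (Phi g k \<theta>) - (1 - quadM g k \<theta> / 2)
      = ((\<Sum>x\<in>Zgk g k. cos (phase g k \<theta> x)) - (N - (\<Sum>x\<in>Zgk g k. (phase g k \<theta> x)^2) / 2)) / N"
    using N unfolding Re_Phi quadM_eq_mean_phase_squared[OF assms(1)]
    by (simp add: N_def card_Zgk field_simps)
  also have "\<bar>\<dots>\<bar> \<le> (real (dimd g k) * \<delta>)^4 / 24"
    using sum_cos_Maclaurin_bound[of "Zgk g k" "phase g k \<theta>", OF finite_Zgk abs_phase_le[OF assms]] N
    unfolding N_def by (simp add: abs_divide pos_divide_le_eq mult.commute)
  finally show ?thesis .
qed

lemma abs_Im_Phi_le: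
  assumes "g \<ge> 2" "\<theta> \<in> Bdelta g k \<delta>"
  shows "\<bar>Im (Phi g k \<theta>)\<bar> \<le> (real (dimd g k) * \<delta>)^3 / 6"
proof -
  have "\<bar>\<Sum>x\<in>Zgk g k. sin (phase g k \<theta> x)\<bar> \<le> real g ^ k * (real (dimd g k) * \<delta>)^3 / 6"
    using abs_sum_sin_le[of "Zgk g k" "phase g k \<theta>", OF finite_Zgk sum_phase_eq_0[OF assms(1)] abs_phase_le[OF assms]]
    by (simp add: card_Zgk)
  then show ?thesis
    using assms(1) unfolding Im_Phi by (simp add: abs_divide field_simps)
qed

theorem lemma4p5:
  fixes g k :: nat and \<delta> :: real
  assumes "g \<ge> 2" and "k \<ge> 2" and "\<delta> > 0"
  shows "(\<exists>\<epsilon> :: (((nat \<times> nat) \<times> nat) \<Rightarrow> real) \<Rightarrow> real.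
            \<forall>\<theta>\<in>Bdelta g k \<delta>.
              Re (Phi g k \<theta>) = exp (- (1/2) * quadM g k \<theta>) * (1 + \<epsilon> \<theta>) \<and>
              \<bar>\<epsilon> \<theta>\<bar> \<le> (1/6) * (real (dimd g k) * \<delta>) ^ 4
                         * exp ((1/2) * real (dimd g k) ^ 2 * \<delta> ^ 2))
       \<and> (\<forall>\<theta>\<in>Bdelta g k \<delta>. \<bar>Im (Phi g k \<theta>)\<bar> \<le> (real (dimd g k) * \<delta>) ^ 3 / 6)
       \<and> (real (dimd g k) * \<delta> < 1 \<longrightarrow> (\<forall>\<theta>\<in>Bdelta g k \<delta>. Re (Phi g k \<theta>) > 1/3))"
proof (intro conjI ballI impI exI[of _ "\<lambda>\<theta>. Re (Phi g k \<theta>) * exp (quadM g k \<theta> / 2) - 1"])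
  fix \<theta> assume \<theta>: "\<theta> \<in> Bdelta g k \<delta>"
  define t where "t = real (dimd g k) * \<delta>"
  note quadM = quadM_bounds[OF assms(1) \<theta>, folded t_def]
    and Re_approx = Re_Phi_approx[OF assms(1) \<theta>, folded t_def]
  show "Re (Phi g k \<theta>) = exp (- (1/2) * quadM g k \<theta>) * (1 + (Re (Phi g k \<theta>) * exp (quadM g k \<theta> / 2) - 1))"
    by (simp add: mult.left_commute flip: exp_add)
  have exp_t: "exp ((1/2) * real (dimd g k) ^ 2 * \<delta> ^ 2) = exp (t^2/2)"
    unfolding t_def by (simp add: power_mult_distrib)
  show "\<bar>Re (Phi g k \<theta>) * exp (quadM g k \<theta> / 2) - 1\<bar>
      \<le> (1/6) * (real (dimd g k) * \<delta>) ^ 4 * exp ((1/2) * real (dimd g k) ^ 2 * \<delta> ^ 2)"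
    using abs_mult_exp_half_minus_one_le[OF quadM Re_approx] unfolding exp_t t_def .
  show "\<bar>Im (Phi g k \<theta>)\<bar> \<le> (real (dimd g k) * \<delta>) ^ 3 / 6"
    by (rule abs_Im_Phi_le[OF assms(1) \<theta>])
  show "Re (Phi g k \<theta>) > 1/3" if "real (dimd g k) * \<delta> < 1"
  proof -
    have "t^2 < 1" "t^4 \<le> 1"
      using that assms(3) by (simp_all add: t_def power_le_one power_less_one_iff)
    then show ?thesis using quadM Re_approx by linarith
  qed
qed

end
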